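(* Let $F\colon\{0,1\}^n\to\{0,1\}^m$. Then $H(X\mid F(X))=\max_A H(A(X;R)\mid X)$, where the maximum is over all (computationally unbounded) $F$-collision-finders $A$, $X$ is uniform on $\{0,1\}^n$, and $R$ is uniformly random coin tosses for $A$.
   Context: An $F$-collision-finder is a randomized algorithm $A$ such that for every $x\in\{0,1\}^n$ and every coin tosses $r$, $A(x;r)\in F^{-1}(F(x))$. $H(\cdot\mid\cdot)$ is conditional Shannon entropy. *)

theory Defs
  imports "HOL-Probability.Probability"
begin

definition bits :: "nat \<Rightarrow> bool list set" where
  "bits n = {xs. length xs = n}"

definition coins :: "(nat \<Rightarrow> bool) measure" where
  "coins = PiM UNIV (\<lambda>_. measure_pmf (bernoulli_pmf (1/2)))"

definition sample_space :: "nat \<Rightarrow> (bool list \<times> (nat \<Rightarrow> bool)) measure" where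
  "sample_space n = measure_pmf (pmf_of_set (bits n)) \<Otimes>\<^sub>M coins"

text \<open>Being a randomized
  algorithm, its output is a measurable function of the coin tosses.\<close>
definition collision_finder ::
  "(bool list \<Rightarrow> bool list) \<Rightarrow> nat \<Rightarrow> (bool list \<Rightarrow> (nat \<Rightarrow> bool) \<Rightarrow> bool list) \<Rightarrow> bool" where
  "collision_finder F n A \<longleftrightarrow>
     (\<forall>x. A x \<in> coins \<rightarrow>\<^sub>M count_space UNIV) \<and>
     (\<forall>x\<in>bits n. \<forall>r. A x r \<in> bits n \<and> F (A x r) = F x)"

definition cond_H ::
  "nat \<Rightarrow> (bool list \<times> (nat \<Rightarrow> bool) \<Rightarrow> bool list) \<Rightarrow> (bool list \<times> (nat \<Rightarrow> bool) \<Rightarrow> bool list) \<Rightarrow> real" where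
  "cond_H n Y Z = prob_space.conditional_entropy (sample_space n) 2
      (count_space UNIV) (count_space UNIV) Y Z"

end

theory Submission
  imports Defs
begin

text \<open>
  Given \<open>X = x\<close>, the output \<open>A(x;R)\<close> of a collision finder is distributed on the fibre
  \<open>F\<^sup>-\<^sup>1(F x)\<close>, so its entropy is at most \<open>log |F\<^sup>-\<^sup>1(F x)|\<close> (Gibbs' inequality). Since \<open>X\<close>
  is uniform, \<open>X\<close> given \<open>F(X) = F x\<close> is uniform on that fibre and has entropy exactly
  \<open>log |F\<^sup>-\<^sup>1(F x)|\<close>; averaging over \<open>x\<close> gives the inequality. Equality is attained by the
  collision finder that outputs a uniform element of the fibre. It is realised from the infinite
  coin sequence by rejection sampling: cut the coins into blocks of \<open>n\<close> bits and output the
  first block that lies in the fibre.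
\<close>

section \<open>Conditional entropy of finitely supported random variables\<close>

lemma (in prob_space) distributed_count_space_countable:
  fixes X :: "'a \<Rightarrow> 'b::countable"
  assumes X: "X \<in> M \<rightarrow>\<^sub>M count_space UNIV"
  shows "distributed M (count_space UNIV) X (\<lambda>b. ennreal (prob {\<omega>\<in>space M. X \<omega> = b}))"
  unfolding distributed_def
proof (intro conjI)
  show "distr M (count_space UNIV) X =
      density (count_space UNIV) (\<lambda>b. ennreal (prob {\<omega>\<in>space M. X \<omega> = b}))"
  proof (rule measure_eqI_countable[where A = UNIV])
    fix b :: 'b
    have "X -` {b} \<inter> space M = {\<omega>\<in>space M. X \<omega> = b}"
      by auto
    moreover have "X -` {b} \<inter> space M \<in> sets M"
      using X by (simp add: measurable_count_space_eq2_countable)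
    ultimately show "emeasure (distr M (count_space UNIV) X) {b} =
        emeasure (density (count_space UNIV) (\<lambda>b. ennreal (prob {\<omega>\<in>space M. X \<omega> = b}))) {b}"
      using X by (simp add: emeasure_distr emeasure_density emeasure_eq_measure)
  qed auto
qed (use X in auto)

lemma (in prob_space) conditional_entropy_finite_support:
  fixes Y :: "'a \<Rightarrow> 'b::countable" and Z :: "'a \<Rightarrow> 'c::countable"
  assumes YZ: "(\<lambda>\<omega>. (Y \<omega>, Z \<omega>)) \<in> M \<rightarrow>\<^sub>M count_space UNIV"
    and D: "finite D" and support: "AE \<omega> in M. (Y \<omega>, Z \<omega>) \<in> D"
  shows "conditional_entropy 2 (count_space UNIV) (count_space UNIV) Y Z =
    - (\<Sum>p\<in>D. prob {\<omega>\<in>space M. (Y \<omega>, Z \<omega>) = p} *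
        log 2 (prob {\<omega>\<in>space M. (Y \<omega>, Z \<omega>) = p} / prob {\<omega>\<in>space M. Z \<omega> = snd p}))"
proof -
  interpret information_space M 2
    by unfold_locales simp
  define Pyz where "Pyz p = prob {\<omega>\<in>space M. (Y \<omega>, Z \<omega>) = p}" for p
  define Pz where "Pz c = prob {\<omega>\<in>space M. Z \<omega> = c}" for c
  have [simp]: "0 \<le> Pyz p" "0 \<le> Pz c" for p c
    by (simp_all add: Pyz_def Pz_def)
  have pair_count_space:
    "count_space UNIV \<Otimes>\<^sub>M count_space UNIV = (count_space UNIV :: ('b \<times> 'c) measure)"
    by (simp add: pair_measure_countable)
  have "Z \<in> M \<rightarrow>\<^sub>M count_space UNIV"
    using measurable_compose[OF YZ, of snd "count_space UNIV"] by simp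
  then have Pz: "distributed M (count_space UNIV) Z (\<lambda>c. ennreal (Pz c))"
    unfolding Pz_def by (rule distributed_count_space_countable)
  have Pyz: "distributed M (count_space UNIV \<Otimes>\<^sub>M count_space UNIV) (\<lambda>\<omega>. (Y \<omega>, Z \<omega>))
      (\<lambda>p. ennreal (Pyz p))"
    unfolding pair_count_space Pyz_def using YZ by (rule distributed_count_space_countable)
  have Pyz_outside: "Pyz p = 0" if "p \<notin> D" for p
  proof -
    have "AE \<omega> in M. (Y \<omega>, Z \<omega>) \<noteq> p"
      using support by eventually_elim (use that in auto)
    then show ?thesis
      unfolding Pyz_def by (subst prob_eq_0_AE) auto
  qed
  have "conditional_entropy 2 (count_space UNIV) (count_space UNIV) Y Z =
     - (\<integral>p. Pyz p * log 2 (Pyz p / Pz (snd p)) \<partial>count_space UNIV)"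
    using conditional_entropy_generic_eq[OF sigma_finite_measure_count_space
        sigma_finite_measure_count_space Pz _ Pyz]
    by (simp add: pair_count_space split_beta')
  also have "(\<integral>p. Pyz p * log 2 (Pyz p / Pz (snd p)) \<partial>count_space UNIV) =
      (\<Sum>p\<in>D. Pyz p * log 2 (Pyz p / Pz (snd p)))"
    using D Pyz_outside by (subst lebesgue_integral_count_space_finite_support)
      (auto intro!: finite_subset[OF _ D] sum.mono_neutral_left)
  finally show ?thesis
    by (simp add: Pyz_def Pz_def)
qed

definition shannon_entropy :: "('a \<Rightarrow> real) \<Rightarrow> 'a set \<Rightarrow> real" where
  "shannon_entropy p S = - (\<Sum>a\<in>S. p a * log 2 (p a))"

lemma shannon_entropy_mono_neutral:
  assumes "finite S" "C \<subseteq> S" "\<And>a. a \<in> S - C \<Longrightarrow> p a = 0"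
  shows "shannon_entropy p S = shannon_entropy p C"
  unfolding shannon_entropy_def using assms by (simp add: sum.mono_neutral_right)

lemma shannon_entropy_uniform: "shannon_entropy (\<lambda>_. 1 / card C) C = log 2 (card C)"
proof (cases "card C = 0")
  case True
  then show ?thesis
    by (simp add: shannon_entropy_def log_def)
next
  case False
  then show ?thesis
    by (simp add: shannon_entropy_def log_divide)
qed

lemma shannon_entropy_le_log_card:
  assumes C: "finite C" and nonneg: "\<And>a. a \<in> C \<Longrightarrow> 0 \<le> p a" and total: "(\<Sum>a\<in>C. p a) = 1"
  shows "shannon_entropy p C \<le> log 2 (card C)"
proof -
  define c where "c = real (card C)"
  have "C \<noteq> {}"
    using total by auto
  then have c: "c > 0"
    using C by (simp add: c_def card_gt_0_iff)
  \<comment> \<open>Gibbs: \<open>ln y \<le> y - 1\<close> termwise, with \<open>y = 1 / (c p a)\<close>\<close>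
  have term_bound: "- (p a * log 2 (p a)) - p a * log 2 c \<le> (1 / c - p a) / ln 2" if "a \<in> C" for a
  proof (cases "p a = 0")
    case True
    then show ?thesis using c by simp
  next
    case False
    then have pa: "p a > 0"
      using nonneg[OF that] by simp
    have "- (p a * log 2 (p a)) - p a * log 2 c = p a * ln (1 / (c * p a)) / ln 2"
      using pa c by (simp add: log_def ln_div ln_mult field_simps)
    also have "\<dots> \<le> p a * (1 / (c * p a) - 1) / ln 2"
      using pa c by (intro divide_right_mono mult_left_mono ln_le_minus_one) auto
    also have "\<dots> = (1 / c - p a) / ln 2"
      using pa c by (simp add: field_simps)
    finally show ?thesis .
  qed
  have "shannon_entropy p C - log 2 c = (\<Sum>a\<in>C. - (p a * log 2 (p a)) - p a * log 2 c)"
    using total by (simp add: shannon_entropy_def sum_subtractf sum_negf flip: sum_distrib_right)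
  also have "\<dots> \<le> (\<Sum>a\<in>C. (1 / c - p a) / ln 2)"
    using term_bound by (rule sum_mono)
  also have "\<dots> = 0"
    using total c by (simp add: c_def sum_subtractf flip: sum_divide_distrib)
  finally show ?thesis
    by (simp add: c_def)
qed

lemma finite_bits: "finite (bits n)"
  unfolding bits_def using finite_lists_length_eq[of "UNIV :: bool set" n] by simp

lemma card_bits: "card (bits n) = 2 ^ n"
  unfolding bits_def using card_lists_length_eq[of "UNIV :: bool set" n] by simp

lemma bits_Suc: "bits (Suc n) = Cons True ` bits n \<union> Cons False ` bits n"
  unfolding bits_def by (auto simp: length_Suc_conv)

lemma sum_bits_Suc:
  "(\<Sum>w\<in>bits (Suc n). f w) = (\<Sum>w\<in>bits n. f (True # w)) + (\<Sum>w\<in>bits n. f (False # w))"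
  unfolding bits_Suc by (subst sum.union_disjoint) (auto simp: finite_bits sum.reindex)

lemma bits_nonempty: "bits n \<noteq> {}"
  by (auto simp: bits_def intro: exI[of _ "replicate n True"])

definition fibre :: "(bool list \<Rightarrow> 'b) \<Rightarrow> nat \<Rightarrow> bool list \<Rightarrow> bool list set" where
  "fibre F n x = {a \<in> bits n. F a = F x}"

lemma fibre_subset_bits: "fibre F n x \<subseteq> bits n"
  by (auto simp: fibre_def)

lemma finite_fibre: "finite (fibre F n x)"
  using finite_subset[OF fibre_subset_bits finite_bits] .

lemma self_in_fibre: "x \<in> bits n \<Longrightarrow> x \<in> fibre F n x"
  by (simp add: fibre_def)

lemma card_fibre_pos: "x \<in> bits n \<Longrightarrow> card (fibre F n x) > 0"
  using self_in_fibre finite_fibre by (metis card_gt_0_iff empty_iff)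

section \<open>Rejection sampling from fair coins\<close>

abbreviation coin_stream :: "bool stream measure" where
  "coin_stream \<equiv> stream_space (measure_pmf (bernoulli_pmf (1 / 2)))"

lemma prob_space_coin_stream: "prob_space coin_stream"
  by (rule prob_space.prob_space_stream_space) (rule prob_space_measure_pmf)

lemma space_coin_stream: "space coin_stream = UNIV"
  by (simp add: space_stream_space)

lemma sets_coin_stream: "sets coin_stream = sets (stream_space (count_space UNIV))"
  by (rule sets_stream_space_cong) simp

lemma measure_coin_stream_Stream:
  assumes E: "E \<in> sets coin_stream"
  shows "measure coin_stream E =
    (measure coin_stream {s. True ## s \<in> E} + measure coin_stream {s. False ## s \<in> E}) / 2"
proof -
  interpret S: prob_space coin_stream
    by (rule prob_space_coin_stream)
  have "ennreal (measure coin_stream E) =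
      (\<integral>\<^sup>+b. ennreal (measure coin_stream {s. b ## s \<in> E}) \<partial>measure_pmf (bernoulli_pmf (1 / 2)))"
    using prob_space.emeasure_stream_space[OF prob_space_measure_pmf E]
    by (simp add: space_coin_stream S.emeasure_eq_measure)
  also have "\<dots> = ennreal (measure coin_stream {s. True ## s \<in> E} / 2 +
      measure coin_stream {s. False ## s \<in> E} / 2)"
    by (simp add: nn_integral_measure_pmf_support[where A = UNIV] UNIV_bool
        divide_ennreal_def flip: ennreal_divide_numeral)
  finally show ?thesis
    by (subst (asm) ennreal_inj) (auto simp: add_divide_distrib)
qed

lemma measure_coin_stream_shift:
  assumes "E \<in> sets coin_stream"
  shows "measure coin_stream E = (\<Sum>w\<in>bits n. measure coin_stream {s. w @- s \<in> E}) / 2 ^ n"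
  using assms
proof (induction n arbitrary: E)
  case 0
  have "bits 0 = {[]}"
    by (auto simp: bits_def)
  then show ?case
    by simp
next
  case (Suc n)
  have "(\<lambda>s. b ## s) \<in> coin_stream \<rightarrow>\<^sub>M coin_stream" for b
    by measurable
  from measurable_sets[OF this Suc.prems]
  have Stream_sets: "{s. b ## s \<in> E} \<in> sets coin_stream" for b
    by (simp add: space_coin_stream vimage_def)
  have "measure coin_stream E =
      (measure coin_stream {s. True ## s \<in> E} + measure coin_stream {s. False ## s \<in> E}) / 2"
    using Suc.prems by (rule measure_coin_stream_Stream)
  also have "\<dots> = ((\<Sum>w\<in>bits n. measure coin_stream {s. (True # w) @- s \<in> E}) +
      (\<Sum>w\<in>bits n. measure coin_stream {s. (False # w) @- s \<in> E})) / 2 ^ Suc n"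
    by (simp add: Suc.IH[OF Stream_sets] add_divide_distrib)
  finally show ?case
    by (simp add: sum_bits_Suc)
qed

definition stream_block :: "nat \<Rightarrow> nat \<Rightarrow> 'a stream \<Rightarrow> 'a list" where
  "stream_block n j s = stake n (sdrop (j * n) s)"

text \<open>The fallback \<open>d\<close> is returned only if no block lies in \<open>C\<close>, which for nonempty \<open>C\<close>
  has probability zero.\<close>

definition rejection_sample :: "nat \<Rightarrow> 'a list set \<Rightarrow> 'a list \<Rightarrow> 'a stream \<Rightarrow> 'a list" where
  "rejection_sample n C d s =
    (if \<exists>j. stream_block n j s \<in> C then stream_block n (LEAST j. stream_block n j s \<in> C) s else d)"

lemma rejection_sample_in: "d \<in> C \<Longrightarrow> rejection_sample n C d s \<in> C"
  unfolding rejection_sample_def by (auto intro: LeastI_ex)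

lemma rejection_sample_shift:
  assumes w: "length w = n"
  shows "rejection_sample n C d (w @- s) = (if w \<in> C then w else rejection_sample n C d s)"
proof -
  have block_0: "stream_block n 0 (w @- s) = w"
    using w by (simp add: stream_block_def stake_shift)
  have block_Suc: "stream_block n (Suc j) (w @- s) = stream_block n j s" for j
    using w by (simp add: stream_block_def sdrop_shift)
  show ?thesis
  proof (cases "w \<in> C")
    case True
    then have "stream_block n 0 (w @- s) \<in> C"
      using block_0 by simp
    then have "\<exists>j. stream_block n j (w @- s) \<in> C" "(LEAST j. stream_block n j (w @- s) \<in> C) = 0"
      by (auto intro: Least_eq_0)
    then show ?thesis
      using True block_0 unfolding rejection_sample_def by simp
  next
    case False
    have ex: "(\<exists>j. stream_block n j (w @- s) \<in> C) \<longleftrightarrow> (\<exists>j. stream_block n j s \<in> C)"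
      using False block_0 block_Suc by (metis not0_implies_Suc)
    have "(LEAST j. stream_block n j (w @- s) \<in> C) = Suc (LEAST j. stream_block n j s \<in> C)"
      if "stream_block n j s \<in> C" for j
      using that False block_0 block_Suc by (subst Least_Suc[of _ "Suc j"]) auto
    then show ?thesis
      using False ex block_Suc unfolding rejection_sample_def by auto
  qed
qed

lemma measurable_rejection_sample:
  "rejection_sample n C d \<in>
    stream_space (count_space UNIV) \<rightarrow>\<^sub>M (count_space UNIV :: 'a::countable list measure)"
  unfolding rejection_sample_def stream_block_def by measurable

lemma measure_rejection_sample:
  assumes C: "C \<subseteq> bits n" and a: "a \<in> C"
  shows "measure coin_stream {s. rejection_sample n C d s = a} = 1 / card C"
proof -
  \<comment> \<open>Conditioning on the first block gives \<open>p = (1 + (2\<^sup>n - |C|) p) / 2\<^sup>n\<close>.\<close>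
  define E where "E = {s. rejection_sample n C d s = a}"
  define p where "p = measure coin_stream E"
  have "E \<in> sets coin_stream"
    using measurable_sets[OF measurable_rejection_sample, of "{a}" n C d]
    by (simp add: E_def sets_coin_stream space_stream_space vimage_def)
  then have "p = (\<Sum>w\<in>bits n. measure coin_stream {s. w @- s \<in> E}) / 2 ^ n"
    unfolding p_def by (rule measure_coin_stream_shift)
  also have "(\<Sum>w\<in>bits n. measure coin_stream {s. w @- s \<in> E}) =
      (\<Sum>w\<in>C. if w = a then 1 else 0) + (\<Sum>w\<in>bits n - C. p)"
  proof -
    interpret S: prob_space coin_stream
      by (rule prob_space_coin_stream)
    have "{s. w @- s \<in> E} = (if w \<in> C then (if w = a then UNIV else {}) else E)" if "w \<in> bits n" for w
      using that by (auto simp: E_def bits_def rejection_sample_shift)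
    then show ?thesis
      using C by (simp add: sum.subset_diff[OF C finite_bits] p_def
          S.prob_space[unfolded space_coin_stream] if_distrib[of "measure coin_stream"] cong: if_cong)
  qed
  also have "\<dots> = 1 + (2 ^ n - real (card C)) * p"
  proof -
    have "card C \<le> 2 ^ n"
      using card_mono[OF finite_bits C] by (simp add: card_bits)
    then show ?thesis
      using C a finite_subset[OF C finite_bits] by (simp add: card_Diff_subset card_bits)
  qed
  finally have "card C * p = 1"
    by (simp add: field_simps)
  moreover have "card C > 0"
    using a finite_subset[OF C finite_bits] by (auto simp: card_gt_0_iff)
  ultimately show ?thesis
    by (simp add: E_def p_def eq_divide_eq mult.commute)
qed

lemma prob_space_coins: "prob_space coins"
  unfolding coins_def by (rule prob_space_PiM) (rule prob_space_measure_pmf)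

lemma space_coins: "space coins = UNIV"
  by (simp add: coins_def space_PiM)

lemma prob_space_sample_space: "prob_space (sample_space n)"
  unfolding sample_space_def by (rule prob_space_pair[OF prob_space_measure_pmf prob_space_coins])

lemma space_sample_space: "space (sample_space n) = UNIV"
  by (simp add: sample_space_def space_pair_measure space_coins)

lemma measurable_sample_space:
  assumes "\<And>x. f x \<in> coins \<rightarrow>\<^sub>M K"
  shows "(\<lambda>\<omega>. f (fst \<omega>) (snd \<omega>)) \<in> sample_space n \<rightarrow>\<^sub>M K"
proof -
  have sets: "sets (sample_space n) = sets (count_space UNIV \<Otimes>\<^sub>M coins)"
    unfolding sample_space_def by (rule sets_pair_measure_cong) simp_all
  show ?thesis
    unfolding measurable_cong_sets[OF sets refl]
    by (rule measurable_pair_measure_countable1) (simp_all add: assms)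
qed

lemma measure_sample_space_Times:
  assumes "B \<in> sets coins"
  shows "measure (sample_space n) (A \<times> B) = card (bits n \<inter> A) / 2 ^ n * measure coins B"
proof -
  interpret coins: prob_space coins
    by (rule prob_space_coins)
  have "measure (measure_pmf (pmf_of_set (bits n))) A = card (bits n \<inter> A) / 2 ^ n"
    by (simp add: measure_pmf_of_set bits_nonempty finite_bits card_bits)
  moreover have "emeasure (sample_space n) (A \<times> B) =
      emeasure (measure_pmf (pmf_of_set (bits n))) A * emeasure coins B"
    unfolding sample_space_def using assms by (intro coins.emeasure_pair_measure_Times) auto
  ultimately show ?thesis
    by (simp add: measure_def enn2real_mult)
qed

lemma measure_sample_space_fst:
  "measure (sample_space n) (A \<times> UNIV) = card (bits n \<inter> A) / 2 ^ n"
proof -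
  interpret coins: prob_space coins
    by (rule prob_space_coins)
  show ?thesis
    using measure_sample_space_Times[OF sets.top, of n A] coins.prob_space
    by (simp add: space_coins)
qed

lemma AE_sample_space_bits: "AE \<omega> in sample_space n. fst \<omega> \<in> bits n"
proof -
  interpret coins: prob_space coins
    by (rule prob_space_coins)
  have "AE x in measure_pmf (pmf_of_set (bits n)). x \<in> bits n"
    by (simp add: AE_measure_pmf_iff set_pmf_of_set[OF bits_nonempty finite_bits])
  then have "AE x in distr (sample_space n) (measure_pmf (pmf_of_set (bits n))) fst. x \<in> bits n"
    unfolding sample_space_def coins.distr_pair_fst .
  then show ?thesis
    by (rule AE_distrD[rotated]) (simp add: sample_space_def)
qed

lemma cond_H_fst_given_image:
  "cond_H n fst (\<lambda>\<omega>. F (fst \<omega>)) = (\<Sum>x\<in>bits n. log 2 (card (fibre F n x))) / 2 ^ n"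
proof -
  interpret prob_space "sample_space n"
    by (rule prob_space_sample_space)
  have "(\<lambda>\<omega>. (fst \<omega>, F (fst \<omega>))) \<in> sample_space n \<rightarrow>\<^sub>M count_space UNIV"
    using measurable_sample_space[of "\<lambda>x r. (x, F x)"] by simp
  moreover have "AE \<omega> in sample_space n. (fst \<omega>, F (fst \<omega>)) \<in> (\<lambda>x. (x, F x)) ` bits n"
    using AE_sample_space_bits by eventually_elim auto
  ultimately have "cond_H n fst (\<lambda>\<omega>. F (fst \<omega>)) =
      - (\<Sum>p\<in>(\<lambda>x. (x, F x)) ` bits n.
        prob {\<omega>\<in>space (sample_space n). (fst \<omega>, F (fst \<omega>)) = p} *
        log 2 (prob {\<omega>\<in>space (sample_space n). (fst \<omega>, F (fst \<omega>)) = p} /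
          prob {\<omega>\<in>space (sample_space n). F (fst \<omega>) = snd p}))"
    unfolding cond_H_def
    by (rule conditional_entropy_finite_support[OF _ finite_imageI[OF finite_bits]])
  also have "\<dots> = - (\<Sum>x\<in>bits n. prob ({x} \<times> UNIV) *
      log 2 (prob ({x} \<times> UNIV) / prob ({a. F a = F x} \<times> UNIV)))"
  proof -
    have "{\<omega>\<in>space (sample_space n). (fst \<omega>, F (fst \<omega>)) = (x, F x)} = {x} \<times> UNIV"
      "{\<omega>\<in>space (sample_space n). F (fst \<omega>) = F x} = {a. F a = F x} \<times> UNIV" for x
      by (auto simp: space_sample_space)
    then show ?thesis
      by (simp add: sum.reindex inj_on_def)
  qed
  also have "\<dots> = - (\<Sum>x\<in>bits n. - (log 2 (card (fibre F n x)) / 2 ^ n))"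
  proof -
    have "bits n \<inter> {a. F a = F x} = fibre F n x" for x
      by (auto simp: fibre_def)
    then show ?thesis
      by (intro arg_cong[where f = uminus] sum.cong refl)
        (simp add: measure_sample_space_fst log_divide card_fibre_pos)
  qed
  finally show ?thesis
    by (simp add: sum_negf sum_divide_distrib)
qed

definition output_prob :: "('x \<Rightarrow> (nat \<Rightarrow> bool) \<Rightarrow> 'a) \<Rightarrow> 'x \<Rightarrow> 'a \<Rightarrow> real" where
  "output_prob A x a = measure coins {r. A x r = a}"

lemma cond_H_collision_finder:
  assumes A: "collision_finder F n A"
  shows "cond_H n (\<lambda>\<omega>. A (fst \<omega>) (snd \<omega>)) fst =
    (\<Sum>x\<in>bits n. shannon_entropy (output_prob A x) (bits n)) / 2 ^ n"
proof -
  interpret prob_space "sample_space n"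
    by (rule prob_space_sample_space)
  have A_measurable: "A x \<in> coins \<rightarrow>\<^sub>M count_space UNIV" for x
    using A by (simp add: collision_finder_def)
  have A_sets: "{r. A x r = a} \<in> sets coins" for x a
    using measurable_sets[OF A_measurable, of "{a}" x] by (simp add: space_coins vimage_def)
  have "(\<lambda>\<omega>. (A (fst \<omega>) (snd \<omega>), fst \<omega>)) \<in> sample_space n \<rightarrow>\<^sub>M count_space UNIV"
    by (rule measurable_sample_space[of "\<lambda>x r. (A x r, x)"])
      (rule measurable_compose[OF A_measurable measurable_count_space])
  moreover have "AE \<omega> in sample_space n. (A (fst \<omega>) (snd \<omega>), fst \<omega>) \<in> bits n \<times> bits n"
    using AE_sample_space_bits by eventually_elim (use A in \<open>auto simp: collision_finder_def\<close>)
  ultimately have "cond_H n (\<lambda>\<omega>. A (fst \<omega>) (snd \<omega>)) fst =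
      - (\<Sum>p\<in>bits n \<times> bits n.
        prob {\<omega>\<in>space (sample_space n). (A (fst \<omega>) (snd \<omega>), fst \<omega>) = p} *
        log 2 (prob {\<omega>\<in>space (sample_space n). (A (fst \<omega>) (snd \<omega>), fst \<omega>) = p} /
          prob {\<omega>\<in>space (sample_space n). fst \<omega> = snd p}))"
    unfolding cond_H_def
    by (rule conditional_entropy_finite_support[OF _ finite_cartesian_product[OF finite_bits finite_bits]])
  also have "\<dots> =
      - (\<Sum>(a, x)\<in>bits n \<times> bits n. output_prob A x a * log 2 (output_prob A x a) / 2 ^ n)"
  proof (intro arg_cong[where f = uminus] sum.cong refl, clarify)
    fix a x assume "x \<in> bits n"
    moreover have
      "{\<omega>\<in>space (sample_space n). (A (fst \<omega>) (snd \<omega>), fst \<omega>) = (a, x)} = {x} \<times> {r. A x r = a}"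
      "{\<omega>\<in>space (sample_space n). fst \<omega> = x} = {x} \<times> UNIV"
      by (auto simp: space_sample_space)
    ultimately show "prob {\<omega>\<in>space (sample_space n). (A (fst \<omega>) (snd \<omega>), fst \<omega>) = (a, x)} *
        log 2 (prob {\<omega>\<in>space (sample_space n). (A (fst \<omega>) (snd \<omega>), fst \<omega>) = (a, x)} /
          prob {\<omega>\<in>space (sample_space n). fst \<omega> = snd (a, x)}) =
      output_prob A x a * log 2 (output_prob A x a) / 2 ^ n"
      by (simp add: measure_sample_space_Times[OF A_sets] measure_sample_space_fst output_prob_def)
  qed
  also have "\<dots> =
      - (\<Sum>x\<in>bits n. \<Sum>a\<in>bits n. output_prob A x a * log 2 (output_prob A x a) / 2 ^ n)"
    by (subst sum.swap) (simp add: sum.cartesian_product)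
  also have "\<dots> = (\<Sum>x\<in>bits n. shannon_entropy (output_prob A x) (bits n)) / 2 ^ n"
    by (simp add: shannon_entropy_def sum_negf flip: sum_divide_distrib)
  finally show ?thesis .
qed

section \<open>Collision finders\<close>

lemma output_prob_nonneg: "0 \<le> output_prob A x a"
  by (simp add: output_prob_def)

lemma output_prob_outside_fibre:
  assumes "collision_finder F n A" "x \<in> bits n" "a \<notin> fibre F n x"
  shows "output_prob A x a = 0"
proof -
  have "{r. A x r = a} = {}"
    using assms by (auto simp: collision_finder_def fibre_def)
  then show ?thesis
    by (simp add: output_prob_def)
qed

lemma sum_output_prob_fibre:
  assumes A: "collision_finder F n A" and x: "x \<in> bits n"
  shows "(\<Sum>a\<in>fibre F n x. output_prob A x a) = 1"
proof -
  interpret coins: prob_space coins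
    by (rule prob_space_coins)
  have A_measurable: "A x \<in> coins \<rightarrow>\<^sub>M count_space UNIV"
    using A by (simp add: collision_finder_def)
  have sets: "{r. A x r = a} \<in> sets coins" for a
    using measurable_sets[OF A_measurable, of "{a}"] by (simp add: space_coins vimage_def)
  have "(\<Sum>a\<in>fibre F n x. output_prob A x a) =
      measure coins (\<Union>a\<in>fibre F n x. {r. A x r = a})"
    unfolding output_prob_def
    by (rule coins.finite_measure_finite_Union[symmetric, OF finite_fibre])
      (auto simp: sets disjoint_family_on_def)
  also have "(\<Union>a\<in>fibre F n x. {r. A x r = a}) = space coins"
    using A x by (auto simp: collision_finder_def fibre_def space_coins)
  finally show ?thesis
    by (simp add: coins.prob_space)
qed

lemma shannon_entropy_collision_finder_le:
  assumes A: "collision_finder F n A" and x: "x \<in> bits n"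
  shows "shannon_entropy (output_prob A x) (bits n) \<le> log 2 (card (fibre F n x))"
proof -
  have "shannon_entropy (output_prob A x) (bits n) =
      shannon_entropy (output_prob A x) (fibre F n x)"
    using output_prob_outside_fibre[OF A x]
    by (intro shannon_entropy_mono_neutral finite_bits fibre_subset_bits) auto
  also have "\<dots> \<le> log 2 (card (fibre F n x))"
    using finite_fibre output_prob_nonneg sum_output_prob_fibre[OF A x]
    by (rule shannon_entropy_le_log_card)
  finally show ?thesis .
qed

definition uniform_collision_finder ::
    "(bool list \<Rightarrow> bool list) \<Rightarrow> nat \<Rightarrow> bool list \<Rightarrow> (nat \<Rightarrow> bool) \<Rightarrow> bool list" where
  "uniform_collision_finder F n x r = rejection_sample n (fibre F n x) x (to_stream r)"

lemma collision_finder_uniform_collision_finder: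
  "collision_finder F n (uniform_collision_finder F n)"
proof -
  have "rejection_sample n (fibre F n x) x \<in> coin_stream \<rightarrow>\<^sub>M count_space UNIV" for x
    by (subst measurable_cong_sets[OF sets_coin_stream refl]) (rule measurable_rejection_sample)
  then have "uniform_collision_finder F n x \<in> coins \<rightarrow>\<^sub>M count_space UNIV" for x
    unfolding uniform_collision_finder_def coins_def
    by (rule measurable_compose[OF measurable_to_stream])
  moreover have "uniform_collision_finder F n x r \<in> fibre F n x" if "x \<in> bits n" for x r
    unfolding uniform_collision_finder_def using that by (intro rejection_sample_in self_in_fibre)
  ultimately show ?thesis
    by (auto simp: collision_finder_def fibre_def)
qed

lemma output_prob_uniform_collision_finder:
  assumes x: "x \<in> bits n" and a: "a \<in> fibre F n x"
  shows "output_prob (uniform_collision_finder F n) x a = 1 / card (fibre F n x)"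
proof -
  let ?E = "{s. rejection_sample n (fibre F n x) x s = a}"
  have "?E \<in> sets coin_stream"
    using measurable_sets[OF measurable_rejection_sample, of "{a}" n "fibre F n x" x]
    by (simp add: sets_coin_stream space_stream_space vimage_def)
  then have "output_prob (uniform_collision_finder F n) x a =
      measure (distr coins coin_stream to_stream) ?E"
    by (simp add: measure_distr coins_def space_PiM output_prob_def uniform_collision_finder_def
        vimage_def)
  also have "\<dots> = measure coin_stream ?E"
    unfolding coins_def by (simp flip: stream_space_eq_distr)
  also have "\<dots> = 1 / card (fibre F n x)"
    using fibre_subset_bits a by (rule measure_rejection_sample)
  finally show ?thesis .
qed

lemma shannon_entropy_uniform_collision_finder:
  assumes x: "x \<in> bits n"
  shows "shannon_entropy (output_prob (uniform_collision_finder F n) x) (bits n) =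
    log 2 (card (fibre F n x))"
proof -
  have "shannon_entropy (output_prob (uniform_collision_finder F n) x) (bits n) =
      shannon_entropy (output_prob (uniform_collision_finder F n) x) (fibre F n x)"
    using output_prob_outside_fibre[OF collision_finder_uniform_collision_finder x]
    by (intro shannon_entropy_mono_neutral finite_bits fibre_subset_bits) auto
  also have "\<dots> = shannon_entropy (\<lambda>_. 1 / card (fibre F n x)) (fibre F n x)"
    unfolding shannon_entropy_def using output_prob_uniform_collision_finder[OF x]
    by (intro arg_cong[where f = uminus] sum.cong) auto
  also have "\<dots> = log 2 (card (fibre F n x))"
    by (rule shannon_entropy_uniform)
  finally show ?thesis .
qed

theorem proposition3p4:
  fixes F :: "bool list \<Rightarrow> bool list" and n m :: nat
  assumes "\<forall>x\<in>bits n. F x \<in> bits m"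
  shows "(\<forall>A. collision_finder F n A \<longrightarrow>
            cond_H n (\<lambda>\<omega>. A (fst \<omega>) (snd \<omega>)) fst \<le> cond_H n fst (\<lambda>\<omega>. F (fst \<omega>)))
       \<and> (\<exists>A. collision_finder F n A \<and>
            cond_H n (\<lambda>\<omega>. A (fst \<omega>) (snd \<omega>)) fst = cond_H n fst (\<lambda>\<omega>. F (fst \<omega>)))"
proof (intro conjI allI impI exI)
  fix A assume A: "collision_finder F n A"
  show "cond_H n (\<lambda>\<omega>. A (fst \<omega>) (snd \<omega>)) fst \<le> cond_H n fst (\<lambda>\<omega>. F (fst \<omega>))"
    unfolding cond_H_collision_finder[OF A] cond_H_fst_given_image
    by (intro divide_right_mono sum_mono shannon_entropy_collision_finder_le[OF A]) simp_all
next
  show A: "collision_finder F n (uniform_collision_finder F n)"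
    by (rule collision_finder_uniform_collision_finder)
  show "cond_H n (\<lambda>\<omega>. uniform_collision_finder F n (fst \<omega>) (snd \<omega>)) fst =
      cond_H n fst (\<lambda>\<omega>. F (fst \<omega>))"
    unfolding cond_H_collision_finder[OF A] cond_H_fst_given_image
    by (simp add: shannon_entropy_uniform_collision_finder)
qed

end
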